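(* For any tree $T$, the matrix $\mathrm{Min4PC}_T=(m_{a,b})_{a,b\in\mathcal{V}_2}$ is hypermetric, is of negative type, and has exactly one positive eigenvalue.
   Context: For a tree $T$ with vertex set $V$ on $n$ vertices, $d_{i,j}$ is the distance between $i,j$ and $\mathcal{V}_2$ the set of 2-element subsets of $V$. $\mathrm{Min4PC}_T$ is the $\binom n2\times\binom n2$ matrix indexed by $\mathcal{V}_2$ whose entry in row $\{i,j\}$, column $\{k,l\}$ is $\min\{d_{i,l}+d_{j,k},\ d_{i,k}+d_{j,l},\ d_{i,j}+d_{k,l}\}$. A symmetric matrix $D=(d_{a,b})$ indexed by a finite set $X$ (with zero diagonal) is hypermetric if $\sum_{\{a,b\}\subseteq X, a\ne b} x_ax_bd_{a,b}\le 0$ for all integer vectors $x\in\mathbb{Z}^X$ with $\sum_a x_a=1$, and of negative type if the same inequality holds for all $x\in\mathbb{Z}^X$ with $\sum_a x_a=0$. *)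

theory Defs
  imports "Jordan_Normal_Form.Char_Poly" "HOL-Library.Product_Lexorder"
begin

definition simple_graph :: "'a set \<Rightarrow> ('a \<Rightarrow> 'a \<Rightarrow> bool) \<Rightarrow> bool" where
  "simple_graph V E \<longleftrightarrow> finite V \<and>
     (\<forall>u v. E u v \<longrightarrow> u \<in> V \<and> v \<in> V \<and> u \<noteq> v \<and> E v u)"

definition is_walk :: "'a set \<Rightarrow> ('a \<Rightarrow> 'a \<Rightarrow> bool) \<Rightarrow> 'a list \<Rightarrow> bool" where
  "is_walk V E xs \<longleftrightarrow> xs \<noteq> [] \<and> set xs \<subseteq> V \<and>
     (\<forall>i. Suc i < length xs \<longrightarrow> E (xs ! i) (xs ! Suc i))"

definition graph_connected :: "'a set \<Rightarrow> ('a \<Rightarrow> 'a \<Rightarrow> bool) \<Rightarrow> bool" where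
  "graph_connected V E \<longleftrightarrow>
     (\<forall>u\<in>V. \<forall>v\<in>V. \<exists>xs. is_walk V E xs \<and> hd xs = u \<and> last xs = v)"

text \<open>A cycle: a closed walk v0 v1 ... vk = v0 with k \<ge> 3 and v0,...,v(k-1) distinct.\<close>
definition is_cycle :: "'a set \<Rightarrow> ('a \<Rightarrow> 'a \<Rightarrow> bool) \<Rightarrow> 'a list \<Rightarrow> bool" where
  "is_cycle V E xs \<longleftrightarrow> is_walk V E xs \<and> length xs \<ge> 4 \<and>
     hd xs = last xs \<and> distinct (tl xs)"

definition is_tree :: "'a set \<Rightarrow> ('a \<Rightarrow> 'a \<Rightarrow> bool) \<Rightarrow> bool" where
  "is_tree V E \<longleftrightarrow> simple_graph V E \<and> V \<noteq> {} \<and> graph_connected V E \<and>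
     \<not> (\<exists>xs. is_cycle V E xs)"

definition gdist :: "'a set \<Rightarrow> ('a \<Rightarrow> 'a \<Rightarrow> bool) \<Rightarrow> 'a \<Rightarrow> 'a \<Rightarrow> nat" where
  "gdist V E u v = (LEAST n. \<exists>xs. is_walk V E xs \<and> hd xs = u \<and> last xs = v
                                   \<and> length xs = Suc n)"

text \<open>The 2-element subsets {i,j} of V are represented by ordered pairs (i,j) with i < j.\<close>
definition pairs2 :: "'a::linorder set \<Rightarrow> ('a \<times> 'a) set" where
  "pairs2 V = {(i, j). i \<in> V \<and> j \<in> V \<and> i < j}"

definition min4pc_entry ::
  "'a::linorder set \<Rightarrow> ('a \<Rightarrow> 'a \<Rightarrow> bool) \<Rightarrow> 'a \<times> 'a \<Rightarrow> 'a \<times> 'a \<Rightarrow> real" where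
  "min4pc_entry V E p q = (case p of (i, j) \<Rightarrow> case q of (k, l) \<Rightarrow>
     (let d = (\<lambda>a b. real (gdist V E a b)) in
      min (d i l + d j k) (min (d i k + d j l) (d i j + d k l))))"

text \<open>The matrix Min4PC_T, with rows/columns ordered by an enumeration of the
  2-subsets (the spectrum does not depend on this enumeration).\<close>
definition min4pc_matrix :: "'a::linorder set \<Rightarrow> ('a \<Rightarrow> 'a \<Rightarrow> bool) \<Rightarrow> real mat" where
  "min4pc_matrix V E =
     (let ps = sorted_list_of_set (pairs2 V); N = length ps in
      mat N N (\<lambda>(r, c). min4pc_entry V E (ps ! r) (ps ! c)))"

text \<open>For a symmetric d, the sum over unordered pairs {a,b}, a \<noteq> b, equals half the
  sum over ordered pairs (a,b), a \<noteq> b.\<close>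

definition hypermetric :: "'b set \<Rightarrow> ('b \<Rightarrow> 'b \<Rightarrow> real) \<Rightarrow> bool" where
  "hypermetric X d \<longleftrightarrow> (\<forall>x :: 'b \<Rightarrow> int. (\<Sum>a\<in>X. x a) = 1 \<longrightarrow>
     (\<Sum>a\<in>X. \<Sum>b\<in>X. if a \<noteq> b then real_of_int (x a * x b) * d a b else 0) / 2 \<le> 0)"

definition negative_type :: "'b set \<Rightarrow> ('b \<Rightarrow> 'b \<Rightarrow> real) \<Rightarrow> bool" where
  "negative_type X d \<longleftrightarrow> (\<forall>x :: 'b \<Rightarrow> int. (\<Sum>a\<in>X. x a) = 0 \<longrightarrow>
     (\<Sum>a\<in>X. \<Sum>b\<in>X. if a \<noteq> b then real_of_int (x a * x b) * d a b else 0) / 2 \<le> 0)"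

definition num_pos_eigenvalues :: "real mat \<Rightarrow> nat" where
  "num_pos_eigenvalues A =
     (\<Sum>r\<in>{r. r > 0 \<and> poly (char_poly A) r = 0}. order r (char_poly A))"

end

(*
  Each edge e of the tree T splits V into the two components of T - e, and d(x, y) is the
  number of edges whose split separates x and y.  The splits of a tree are pairwise
  compatible, so the edges realise at most one of the three quartet topologies on
  {i, j, k, l}; consequently the minimum of the three pair sums in Min4PC counts exactly the
  edges that separate one of the pairs {i, j}, {k, l} but not the other.  Thus Min4PC_T is
  itself a sum of cut semimetrics on V_2, one for each edge.  For a cut with sides S and
  X - S the quadratic form sum_{a,b} x_a x_b delta_S(a, b) equals 2 x(S) (x(X) - x(S)),
  which is non-positive when x(X) = 0, and also when x(X) = 1 and x is integral: this gives
  negative type and hypermetricity.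

  For the spectrum, diagonalise the symmetric matrix orthogonally.  Two eigenvectors with
  positive eigenvalues would span a plane meeting the hyperplane x(X) = 0, on which the form
  is non-positive; so there is at most one positive eigenvalue.  The trace is 0 and the
  matrix is nonzero once |V| >= 3, so there is at least one.
*)
theory Submission
  imports Defs "Jordan_Normal_Form.Spectral_Radius"
begin

section \<open>Split distances\<close>

definition split_dist :: "'e set \<Rightarrow> ('e \<Rightarrow> 'b \<Rightarrow> bool) \<Rightarrow> 'b \<Rightarrow> 'b \<Rightarrow> nat" where
  "split_dist F s a b = card {e \<in> F. s e a \<noteq> s e b}"

definition pair_split :: "('e \<Rightarrow> 'b \<Rightarrow> bool) \<Rightarrow> 'e \<Rightarrow> 'b \<times> 'b \<Rightarrow> bool" where
  "pair_split s e p \<longleftrightarrow> s e (fst p) \<noteq> s e (snd p)"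

definition compatible_on :: "'b set \<Rightarrow> ('b \<Rightarrow> bool) \<Rightarrow> ('b \<Rightarrow> bool) \<Rightarrow> bool" where
  "compatible_on X g h \<longleftrightarrow> (\<exists>\<alpha> \<beta>. \<forall>z\<in>X. g z \<noteq> \<alpha> \<or> h z \<noteq> \<beta>)"

definition quartet :: "('b \<Rightarrow> bool) \<Rightarrow> 'b \<Rightarrow> 'b \<Rightarrow> 'b \<Rightarrow> 'b \<Rightarrow> bool" where
  "quartet g a b c c' \<longleftrightarrow> g a = g b \<and> g c = g c' \<and> g a \<noteq> g c"

lemma real_card_filter: "finite F \<Longrightarrow> real (card {e \<in> F. P e}) = (\<Sum>e\<in>F. of_bool (P e))"
  by (simp add: of_bool_def sum.inter_filter[symmetric])

lemma split_dist_as_sum: "finite F \<Longrightarrow> real (split_dist F s a b) = (\<Sum>e\<in>F. of_bool (s e a \<noteq> s e b))"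
  unfolding split_dist_def by (rule real_card_filter)

lemma split_dist_same [simp]: "split_dist F s a a = 0"
  by (simp add: split_dist_def)

lemma split_dist_commute: "split_dist F s a b = split_dist F s b a"
  unfolding split_dist_def by metis

lemma cut_quadratic_form:
  fixes w :: "'b \<Rightarrow> real"
  assumes "finite X"
  shows "(\<Sum>a\<in>X. \<Sum>b\<in>X. w a * w b * of_bool (g a \<noteq> g b))
       = 2 * (\<Sum>a\<in>X. of_bool (g a) * w a) * ((\<Sum>a\<in>X. w a) - (\<Sum>a\<in>X. of_bool (g a) * w a))"
proof -
  define P where "P = (\<Sum>a\<in>X. of_bool (g a) * w a)"
  define Q where "Q = (\<Sum>a\<in>X. of_bool (\<not> g a) * w a)"
  have cut: "w a * w b * of_bool (g a \<noteq> g b)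
      = of_bool (g a) * w a * (of_bool (\<not> g b) * w b) + of_bool (g b) * w b * (of_bool (\<not> g a) * w a)"
    for a b by (cases "g a"; cases "g b") simp_all
  have "(\<Sum>a\<in>X. \<Sum>b\<in>X. w a * w b * of_bool (g a \<noteq> g b)) = P * Q + Q * P"
    unfolding cut sum.distrib P_def Q_def sum_product by (simp add: mult_ac)
  moreover have "(\<Sum>a\<in>X. w a) = P + Q"
    unfolding P_def Q_def sum.distrib[symmetric] by (rule sum.cong) auto
  ultimately show ?thesis unfolding P_def[symmetric] by simp
qed

lemma split_dist_quadratic_form:
  fixes w :: "'b \<Rightarrow> real"
  assumes "finite X" "finite F"
  shows "(\<Sum>a\<in>X. \<Sum>b\<in>X. w a * w b * real (split_dist F s a b))
       = (\<Sum>e\<in>F. 2 * (\<Sum>a\<in>X. of_bool (s e a) * w a) * ((\<Sum>a\<in>X. w a) - (\<Sum>a\<in>X. of_bool (s e a) * w a)))"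
proof -
  have "(\<Sum>a\<in>X. \<Sum>b\<in>X. w a * w b * real (split_dist F s a b))
      = (\<Sum>e\<in>F. \<Sum>a\<in>X. \<Sum>b\<in>X. w a * w b * of_bool (s e a \<noteq> s e b))"
    unfolding split_dist_as_sum[OF assms(2)] sum_distrib_left
    by (simp add: sum.swap[of _ F])
  then show ?thesis using cut_quadratic_form[OF assms(1)] by simp
qed

lemma split_dist_form_nonpos:
  fixes w :: "'b \<Rightarrow> real"
  assumes "finite X" "finite F" "(\<Sum>a\<in>X. w a) = 0"
  shows "(\<Sum>a\<in>X. \<Sum>b\<in>X. w a * w b * real (split_dist F s a b)) \<le> 0"
  unfolding split_dist_quadratic_form[OF assms(1,2)] assms(3)
  by (rule sum_nonpos) (simp add: mult_le_0_iff)

lemma int_times_one_minus_nonpos: "of_int k * (1 - of_int k) \<le> (0::real)"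
proof (cases "k \<le> 0")
  case True
  then show ?thesis by (intro mult_nonpos_nonneg) simp_all
next
  case False
  then show ?thesis by (intro mult_nonneg_nonpos) simp_all
qed

lemma split_dist_form_nonpos_int:
  fixes x :: "'b \<Rightarrow> int"
  assumes "finite X" "finite F" "(\<Sum>a\<in>X. x a) = 1"
  shows "(\<Sum>a\<in>X. \<Sum>b\<in>X. of_int (x a) * of_int (x b) * real (split_dist F s a b)) \<le> 0"
proof -
  have total: "(\<Sum>a\<in>X. real_of_int (x a)) = 1"
    using assms(3) by (metis of_int_1 of_int_sum)
  show ?thesis
    unfolding split_dist_quadratic_form[OF assms(1,2)] total
  proof (intro sum_nonpos)
    fix e
    define k where "k = (\<Sum>a\<in>X. of_bool (s e a) * x a)"
    have "(\<Sum>a\<in>X. of_bool (s e a) * real_of_int (x a)) = of_int k"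
      by (simp add: k_def)
    then show "2 * (\<Sum>a\<in>X. of_bool (s e a) * real_of_int (x a))
        * (1 - (\<Sum>a\<in>X. of_bool (s e a) * real_of_int (x a))) \<le> 0"
      using int_times_one_minus_nonpos[of k] by simp
  qed
qed

lemma hypermetric_split_dist:
  assumes "finite X" "finite F"
    and m: "\<And>a b. a \<in> X \<Longrightarrow> b \<in> X \<Longrightarrow> m a b = real (split_dist F s a b)"
  shows "hypermetric X m"
  unfolding hypermetric_def
proof (intro allI impI)
  fix x :: "_ \<Rightarrow> int" assume "(\<Sum>a\<in>X. x a) = 1"
  then have "(\<Sum>a\<in>X. \<Sum>b\<in>X. of_int (x a) * of_int (x b) * real (split_dist F s a b)) \<le> 0"
    by (rule split_dist_form_nonpos_int[OF assms(1,2)])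
  moreover have "(\<Sum>a\<in>X. \<Sum>b\<in>X. if a \<noteq> b then of_int (x a * x b) * m a b else 0)
      = (\<Sum>a\<in>X. \<Sum>b\<in>X. of_int (x a) * of_int (x b) * real (split_dist F s a b))"
    using m by (intro sum.cong refl) auto
  ultimately show "(\<Sum>a\<in>X. \<Sum>b\<in>X. if a \<noteq> b then of_int (x a * x b) * m a b else 0) / 2 \<le> 0"
    by simp
qed

lemma negative_type_split_dist:
  assumes "finite X" "finite F"
    and m: "\<And>a b. a \<in> X \<Longrightarrow> b \<in> X \<Longrightarrow> m a b = real (split_dist F s a b)"
  shows "negative_type X m"
  unfolding negative_type_def
proof (intro allI impI)
  fix x :: "_ \<Rightarrow> int" assume "(\<Sum>a\<in>X. x a) = 0"
  then have "(\<Sum>a\<in>X. \<Sum>b\<in>X. of_int (x a) * of_int (x b) * real (split_dist F s a b)) \<le> 0"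
    by (intro split_dist_form_nonpos[OF assms(1,2)]) (metis of_int_0 of_int_sum)
  moreover have "(\<Sum>a\<in>X. \<Sum>b\<in>X. if a \<noteq> b then of_int (x a * x b) * m a b else 0)
      = (\<Sum>a\<in>X. \<Sum>b\<in>X. of_int (x a) * of_int (x b) * real (split_dist F s a b))"
    using m by (intro sum.cong refl) auto
  ultimately show "(\<Sum>a\<in>X. \<Sum>b\<in>X. if a \<noteq> b then of_int (x a * x b) * m a b else 0) / 2 \<le> 0"
    by simp
qed

lemma quartet_pair_sums:
  fixes g :: "'b \<Rightarrow> bool"
  shows "of_bool (g i \<noteq> g l) + of_bool (g j \<noteq> g k)
           = (of_bool ((g i \<noteq> g j) \<noteq> (g k \<noteq> g l)) :: real) + 2 * of_bool (quartet g i j k l \<or> quartet g i k j l)"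
    and "of_bool (g i \<noteq> g k) + of_bool (g j \<noteq> g l)
           = (of_bool ((g i \<noteq> g j) \<noteq> (g k \<noteq> g l)) :: real) + 2 * of_bool (quartet g i j k l \<or> quartet g i l j k)"
    and "of_bool (g i \<noteq> g j) + of_bool (g k \<noteq> g l)
           = (of_bool ((g i \<noteq> g j) \<noteq> (g k \<noteq> g l)) :: real) + 2 * of_bool (quartet g i k j l \<or> quartet g i l j k)"
  unfolding quartet_def
  by (cases "g i"; cases "g j"; cases "g k"; cases "g l"; simp)+

lemma compatible_on_refl: "compatible_on X g g"
  unfolding compatible_on_def by blast

lemma quartets_incompatible:
  assumes "compatible_on X g h" and "i \<in> X" "j \<in> X" "k \<in> X" "l \<in> X"
  shows "\<not> (quartet g i j k l \<and> quartet h i k j l)"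
    and "\<not> (quartet g i j k l \<and> quartet h i l j k)"
    and "\<not> (quartet g i k j l \<and> quartet h i l j k)"
proof -
  obtain \<alpha> \<beta> where "\<And>z. z \<in> X \<Longrightarrow> g z \<noteq> \<alpha> \<or> h z \<noteq> \<beta>"
    using assms(1) unfolding compatible_on_def by blast
  then have "g i \<noteq> \<alpha> \<or> h i \<noteq> \<beta>" "g j \<noteq> \<alpha> \<or> h j \<noteq> \<beta>"
    "g k \<noteq> \<alpha> \<or> h k \<noteq> \<beta>" "g l \<noteq> \<alpha> \<or> h l \<noteq> \<beta>"
    using assms(2-5) by blast+
  then show "\<not> (quartet g i j k l \<and> quartet h i k j l)"
    and "\<not> (quartet g i j k l \<and> quartet h i l j k)"
    and "\<not> (quartet g i k j l \<and> quartet h i l j k)"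
    unfolding quartet_def by argo+
qed

lemma split_dist_four_point:
  fixes s :: "'e \<Rightarrow> 'b \<Rightarrow> bool"
  assumes F: "finite F" and X: "i \<in> X" "j \<in> X" "k \<in> X" "l \<in> X"
    and compat: "\<And>e f. e \<in> F \<Longrightarrow> f \<in> F \<Longrightarrow> e \<noteq> f \<Longrightarrow> compatible_on X (s e) (s f)"
  shows "min (real (split_dist F s i l) + real (split_dist F s j k))
           (min (real (split_dist F s i k) + real (split_dist F s j l))
                (real (split_dist F s i j) + real (split_dist F s k l)))
         = real (split_dist F (pair_split s) (i, j) (k, l))"
proof -
  let ?D = "real (split_dist F (pair_split s) (i, j) (k, l))"
  define Q1 where "Q1 e \<longleftrightarrow> quartet (s e) i j k l" for e
  define Q2 where "Q2 e \<longleftrightarrow> quartet (s e) i k j l" for e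
  define Q3 where "Q3 e \<longleftrightarrow> quartet (s e) i l j k" for e
  define C where "C P = real (card {e \<in> F. P e})" for P
  have to_C: "(\<Sum>e\<in>F. of_bool (pair_split s e (i, j) \<noteq> pair_split s e (k, l)) + 2 * of_bool (P e))
      = ?D + 2 * C P" for P
    by (simp add: split_dist_as_sum[OF F] C_def real_card_filter[OF F] sum.distrib sum_distrib_left)
  have sums: "real (split_dist F s a b) + real (split_dist F s c d)
      = (\<Sum>e\<in>F. of_bool (s e a \<noteq> s e b) + of_bool (s e c \<noteq> s e d))" for a b c d
    by (simp add: split_dist_as_sum[OF F] sum.distrib)
  have pair_sums:
    "real (split_dist F s i l) + real (split_dist F s j k) = ?D + 2 * C (\<lambda>e. Q1 e \<or> Q2 e)"
    "real (split_dist F s i k) + real (split_dist F s j l) = ?D + 2 * C (\<lambda>e. Q1 e \<or> Q3 e)"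
    "real (split_dist F s i j) + real (split_dist F s k l) = ?D + 2 * C (\<lambda>e. Q2 e \<or> Q3 e)"
    unfolding sums to_C[symmetric] pair_split_def fst_conv snd_conv Q1_def Q2_def Q3_def
    by (intro sum.cong refl, rule quartet_pair_sums)+
  have one_type: "\<not> (P e \<and> P' f)"
    if "e \<in> F" "f \<in> F" "(P, P') \<in> {(Q1, Q2), (Q1, Q3), (Q2, Q3)}" for e f P P'
  proof -
    have "compatible_on X (s e) (s f)"
      using compat that(1,2) compatible_on_refl by (cases "e = f") auto
    then show ?thesis
      using that(3) quartets_incompatible[OF _ X] unfolding Q1_def Q2_def Q3_def by blast
  qed
  have C_eq_0: "C P = 0 \<longleftrightarrow> (\<forall>e\<in>F. \<not> P e)" for P
    unfolding C_def using F by auto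
  have "C (\<lambda>e. Q1 e \<or> Q2 e) = 0 \<or> C (\<lambda>e. Q1 e \<or> Q3 e) = 0 \<or> C (\<lambda>e. Q2 e \<or> Q3 e) = 0"
    unfolding C_eq_0 using one_type by blast
  moreover have "C (\<lambda>e. Q1 e \<or> Q2 e) \<ge> 0" "C (\<lambda>e. Q1 e \<or> Q3 e) \<ge> 0" "C (\<lambda>e. Q2 e \<or> Q3 e) \<ge> 0"
    unfolding C_def by simp_all
  ultimately show ?thesis unfolding pair_sums by (auto simp: min_def)
qed

section \<open>Distances and splits in a tree\<close>

lemma in_set_drop_conv_nth: "x \<in> set (drop n xs) \<longleftrightarrow> (\<exists>i. n \<le> i \<and> i < length xs \<and> xs ! i = x)"
proof
  assume "x \<in> set (drop n xs)"
  then obtain j where "j < length (drop n xs)" "drop n xs ! j = x" by (auto simp: in_set_conv_nth)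
  then show "\<exists>i. n \<le> i \<and> i < length xs \<and> xs ! i = x" by (intro exI[of _ "n + j"]) auto
next
  assume "\<exists>i. n \<le> i \<and> i < length xs \<and> xs ! i = x"
  then obtain i where "n \<le> i" "i < length xs" "xs ! i = x" by auto
  then have "drop n xs ! (i - n) = x" "i - n < length (drop n xs)" by auto
  then show "x \<in> set (drop n xs)" by (metis nth_mem)
qed

lemma exists_change_between:
  fixes f :: "nat \<Rightarrow> bool"
  assumes "f a \<noteq> f b" "a \<le> b"
  shows "\<exists>t. a \<le> t \<and> t < b \<and> f t \<noteq> f (Suc t)"
  using assms
proof (induction b)
  case (Suc b)
  show ?case
  proof (cases "a \<le> b \<and> f a \<noteq> f b")
    case True
    with Suc.IH show ?thesis by (metis less_Suc_eq)
  next
    case False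
    with Suc.prems show ?thesis by (metis le_Suc_eq lessI order_refl)
  qed
qed simp

locale tree_graph =
  fixes V :: "'a::linorder set" and E :: "'a \<Rightarrow> 'a \<Rightarrow> bool"
  assumes tree: "is_tree V E"
begin

abbreviation d :: "'a \<Rightarrow> 'a \<Rightarrow> nat" where "d \<equiv> gdist V E"

lemma finite_V: "finite V"
  using tree unfolding is_tree_def simple_graph_def by auto

lemma edgeD: assumes "E u v" shows "u \<in> V" "v \<in> V" "u \<noteq> v" "E v u"
  using tree assms unfolding is_tree_def simple_graph_def by auto

lemma no_cycle: "\<not> is_cycle V E xs"
  using tree unfolding is_tree_def by blast

definition walk :: "'a \<Rightarrow> 'a \<Rightarrow> 'a list \<Rightarrow> bool" where
  "walk u v xs \<longleftrightarrow> xs \<noteq> [] \<and> set xs \<subseteq> V \<and> successively E xs \<and> hd xs = u \<and> last xs = v"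

lemma is_walk_iff: "is_walk V E xs \<longleftrightarrow> xs \<noteq> [] \<and> set xs \<subseteq> V \<and> successively E xs"
  unfolding is_walk_def successively_conv_nth by auto

lemma walk_iff_is_walk: "walk u v xs \<longleftrightarrow> is_walk V E xs \<and> hd xs = u \<and> last xs = v"
  unfolding walk_def is_walk_iff by auto

lemma walk_ends_in_V: "walk u v xs \<Longrightarrow> u \<in> V \<and> v \<in> V"
  unfolding walk_def by auto

lemma walk_single: "u \<in> V \<Longrightarrow> walk u u [u]"
  unfolding walk_def by auto

lemma walk_edge: "E u v \<Longrightarrow> walk u v [u, v]"
  unfolding walk_def using edgeD(1,2) by auto

lemma walk_rev: "walk u v xs \<Longrightarrow> walk v u (rev xs)"
  unfolding walk_def by (auto simp: hd_rev last_rev intro: successively_mono edgeD(4))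

lemma walk_append: assumes "walk u v xs" "walk v w ys" shows "walk u w (xs @ tl ys)"
proof (cases ys)
  case (Cons y ys')
  then show ?thesis using assms
    by (cases ys') (auto simp: walk_def successively_append_iff)
qed (use assms in \<open>simp add: walk_def\<close>)

lemma walk_take: "walk u v xs \<Longrightarrow> i < length xs \<Longrightarrow> walk u (xs ! i) (take (Suc i) xs)"
  unfolding walk_def successively_conv_nth
  by (auto simp: hd_conv_nth last_conv_nth dest: in_set_takeD)

lemma walk_drop: "walk u v xs \<Longrightarrow> i < length xs \<Longrightarrow> walk (xs ! i) v (drop i xs)"
  unfolding walk_def successively_conv_nth
  by (auto simp: hd_drop_conv_nth last_drop dest: in_set_dropD)

lemma walk_exists: "u \<in> V \<Longrightarrow> v \<in> V \<Longrightarrow> \<exists>xs. walk u v xs"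
  using tree unfolding is_tree_def graph_connected_def walk_iff_is_walk by blast

lemma dist_le_walk_length: assumes "walk u v xs" shows "Suc (d u v) \<le> length xs"
proof -
  have "xs \<noteq> []" using assms unfolding walk_def by simp
  then have "d u v \<le> length xs - 1"
    unfolding gdist_def using assms unfolding walk_iff_is_walk by (intro Least_le) auto
  then show ?thesis using \<open>xs \<noteq> []\<close> by (cases xs) auto
qed

definition geodesic :: "'a \<Rightarrow> 'a \<Rightarrow> 'a list \<Rightarrow> bool" where
  "geodesic u v xs \<longleftrightarrow> walk u v xs \<and> length xs = Suc (d u v)"

lemma geodesic_exists: assumes "u \<in> V" "v \<in> V" shows "\<exists>xs. geodesic u v xs"
proof -
  let ?P = "\<lambda>n. \<exists>xs. is_walk V E xs \<and> hd xs = u \<and> last xs = v \<and> length xs = Suc n"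
  obtain xs where xs: "walk u v xs" using walk_exists assms by blast
  then have "xs \<noteq> []" unfolding walk_def by simp
  then have "?P (length xs - 1)" using xs unfolding walk_iff_is_walk by auto
  then have "?P (d u v)" unfolding gdist_def by (rule LeastI)
  then show ?thesis unfolding geodesic_def walk_iff_is_walk by blast
qed

lemma dist_triangle: assumes "u \<in> V" "v \<in> V" "w \<in> V" shows "d u w \<le> d u v + d v w"
proof -
  obtain xs ys where "geodesic u v xs" "geodesic v w ys" using geodesic_exists assms by meson
  then have "walk u w (xs @ tl ys)" "length (xs @ tl ys) = Suc (d u v + d v w)"
    using walk_append unfolding geodesic_def by auto
  then show ?thesis using dist_le_walk_length by fastforce
qed

lemma dist_commute: assumes "u \<in> V" "v \<in> V" shows "d u v = d v u"
proof -
  have "d v u \<le> d u v" if uv: "u \<in> V" "v \<in> V" for u v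
  proof -
    obtain xs where "geodesic u v xs" using geodesic_exists[OF uv] by blast
    then show ?thesis using dist_le_walk_length[OF walk_rev] unfolding geodesic_def by force
  qed
  with assms show ?thesis by (meson antisym)
qed

lemma dist_self: "u \<in> V \<Longrightarrow> d u u = 0"
  using dist_le_walk_length[OF walk_single] by fastforce

lemma dist_eq_0D: assumes "u \<in> V" "v \<in> V" "d u v = 0" shows "u = v"
proof -
  obtain xs where "walk u v xs" "length xs = 1"
    using geodesic_exists[OF assms(1,2)] assms(3) unfolding geodesic_def by auto
  then show ?thesis unfolding walk_def by (cases xs) auto
qed

lemma dist_edge: assumes "E u v" shows "d u v = 1"
proof -
  have "d u v \<le> 1" using dist_le_walk_length[OF walk_edge[OF assms]] by simp
  moreover have "d u v \<noteq> 0" using dist_eq_0D edgeD[OF assms] by blast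
  ultimately show ?thesis by simp
qed

lemma dist_edge_le: assumes "E u v" "x \<in> V" shows "d x v \<le> d x u + 1"
  using dist_triangle[of x u v] dist_edge[OF assms(1)] edgeD[OF assms(1)] assms(2) by simp

lemma geodesic_in_V: "geodesic u v xs \<Longrightarrow> set xs \<subseteq> V"
  unfolding geodesic_def walk_def by auto

lemma geodesic_length: "geodesic u v xs \<Longrightarrow> length xs = Suc (d u v)"
  unfolding geodesic_def by auto

lemma geodesic_first: "geodesic u v xs \<Longrightarrow> xs ! 0 = u"
  unfolding geodesic_def walk_def by (auto simp: hd_conv_nth)

lemma geodesic_last: "geodesic u v xs \<Longrightarrow> xs ! d u v = v"
  unfolding geodesic_def walk_def by (metis diff_Suc_1 last_conv_nth)

lemma geodesic_edge: "geodesic u v xs \<Longrightarrow> t < d u v \<Longrightarrow> E (xs ! t) (xs ! Suc t)"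
  unfolding geodesic_def walk_def by (auto simp: successively_conv_nth)

lemma geodesic_distinct: assumes "geodesic u v xs" shows "distinct xs"
proof (rule ccontr)
  assume "\<not> distinct xs"
  then obtain i j where ij: "i < j" "j < length xs" "xs ! i = xs ! j"
    by (metis distinct_conv_nth linorder_neqE_nat)
  have w: "walk u v xs" using assms unfolding geodesic_def by simp
  have "walk (xs ! i) v (drop j xs)" using walk_drop[OF w ij(2)] ij(3) by simp
  then have "walk u v (take (Suc i) xs @ tl (drop j xs))"
    using walk_append[OF walk_take[OF w]] ij by simp
  from dist_le_walk_length[OF this] have "Suc (d u v) \<le> Suc i + (length xs - Suc j)"
    using ij by simp
  then show False using geodesic_length[OF assms] ij by simp
qed

lemma geodesic_nth_dist: assumes "geodesic u v xs" "t \<le> d u v"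
  shows "d u (xs ! t) = t" "d (xs ! t) v = d u v - t"
proof -
  have w: "walk u v xs" and len: "length xs = Suc (d u v)"
    using assms(1) unfolding geodesic_def by auto
  have t: "t < length xs" using assms(2) len by simp
  have "d u (xs ! t) \<le> t" "d (xs ! t) v \<le> d u v - t"
    using dist_le_walk_length[OF walk_take[OF w t]] dist_le_walk_length[OF walk_drop[OF w t]] t len
    by simp_all
  moreover have "xs ! t \<in> V" using w t unfolding walk_def by (meson nth_mem subsetD)
  then have "d u v \<le> d u (xs ! t) + d (xs ! t) v"
    using dist_triangle walk_ends_in_V[OF w] by blast
  ultimately show "d u (xs ! t) = t" "d (xs ! t) v = d u v - t" using assms(2) by linarith+
qed

lemma geodesic_nth_eq_index:
  assumes "geodesic x u p" "geodesic x v q" "a \<le> d x u" "b \<le> d x v" "p ! a = q ! b"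
  shows "a = b"
  using geodesic_nth_dist(1)[OF assms(1,3)] geodesic_nth_dist(1)[OF assms(2,4)] assms(5) by simp

text \<open>\<open>P @ rev Q\<close> would be a cycle.\<close>
lemma paths_to_edge_ends_impossible:
  assumes P: "walk w u P" "distinct P" and Q: "walk w v Q" "distinct Q" and uv: "E u v"
    and disjoint: "set (tl P) \<inter> set Q = {}" and long: "4 \<le> length P + length Q"
  shows False
proof -
  let ?C = "P @ rev Q"
  have R: "walk v w (rev Q)" by (rule walk_rev[OF Q(1)])
  have "P \<noteq> []" using P(1) unfolding walk_def by simp
  have "is_walk V E ?C"
    using P(1) R uv unfolding is_walk_iff walk_def by (auto simp: successively_append_iff)
  moreover have "hd ?C = last ?C" using P(1) R unfolding walk_def by auto
  moreover have "distinct (tl ?C)"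
    using \<open>P \<noteq> []\<close> P(2) Q(2) disjoint by (simp add: distinct_tl)
  moreover have "4 \<le> length ?C" using long by simp
  ultimately show False using no_cycle unfolding is_cycle_def by blast
qed

text \<open>Otherwise the geodesics from \<open>x\<close> to \<open>u\<close> and to \<open>v\<close>, cut at the last index where they
  agree, would close up through \<open>uv\<close> to a cycle.\<close>
lemma edge_ends_dist_neq: assumes uv: "E u v" and x: "x \<in> V" shows "d x u \<noteq> d x v"
proof
  assume eq: "d x u = d x v"
  define k where "k = d x u"
  obtain p q where p: "geodesic x u p" and q: "geodesic x v q"
    using geodesic_exists x edgeD(1,2)[OF uv] by blast
  have len: "length p = Suc k" "length q = Suc k"
    using geodesic_length[OF p] geodesic_length[OF q] eq k_def by auto
  define M where "M = {s. s \<le> k \<and> p ! s = q ! s}"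
  define s where "s = Max M"
  have "finite M" unfolding M_def by simp
  moreover have "0 \<in> M" unfolding M_def using geodesic_first[OF p] geodesic_first[OF q] by simp
  ultimately have "s \<in> M" unfolding s_def by (intro Max_in) auto
  then have s: "s \<le> k" "p ! s = q ! s" unfolding M_def by simp_all
  have s_max: "a \<le> s" if "a \<in> M" for a unfolding s_def using \<open>finite M\<close> that by simp
  have "s \<noteq> k"
    using s edgeD(3)[OF uv] geodesic_last[OF p] geodesic_last[OF q] eq k_def by auto
  then have "s < k" using s by simp
  have walks: "walk (p ! s) u (drop s p)" "walk (p ! s) v (drop s q)"
    using walk_drop[of x u p s] walk_drop[of x v q s] p q s(2) len \<open>s < k\<close>
    unfolding geodesic_def by simp_all
  have disjoint: "set (tl (drop s p)) \<inter> set (drop s q) = {}"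
  proof (rule ccontr)
    have "tl (drop s p) = drop (Suc s) p" by (simp add: drop_Suc tl_drop)
    moreover assume "set (tl (drop s p)) \<inter> set (drop s q) \<noteq> {}"
    ultimately obtain z where "z \<in> set (drop (Suc s) p)" "z \<in> set (drop s q)" by auto
    then obtain a b where a: "Suc s \<le> a" "a < length p" "p ! a = z"
      and b: "s \<le> b" "b < length q" "q ! b = z"
      unfolding in_set_drop_conv_nth by blast
    then have "a = b" using geodesic_nth_eq_index[OF p q, of a b] len eq k_def by simp
    then have "a \<in> M" unfolding M_def using a b len by simp
    then show False using s_max a(1) by fastforce
  qed
  have distinct: "distinct (drop s p)" "distinct (drop s q)"
    using geodesic_distinct[OF p] geodesic_distinct[OF q] by simp_all
  have "4 \<le> length (drop s p) + length (drop s q)" using len \<open>s < k\<close> by simp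
  then show False
    by (rule paths_to_edge_ends_impossible[OF walks(1) distinct(1) walks(2) distinct(2) uv disjoint])
qed

lemma geodesics_disjoint:
  assumes p: "geodesic a u p" and q: "geodesic b v q" and far: "d a u + d b v < d a v + d b u"
  shows "set p \<inter> set q = {}"
proof (rule ccontr)
  assume "set p \<inter> set q \<noteq> {}"
  then obtain z where "z \<in> set p" "z \<in> set q" by blast
  then obtain s t where st0: "s < length p" "t < length q" "p ! s = q ! t"
    unfolding in_set_conv_nth by metis
  then have st: "s \<le> d a u" "t \<le> d b v" "p ! s = q ! t"
    using geodesic_length[OF p] geodesic_length[OF q] by simp_all
  have "p ! s \<in> V" using st0(1) geodesic_in_V[OF p] nth_mem by blast
  have "a \<in> V" "u \<in> V" "b \<in> V" "v \<in> V"
    using p q walk_ends_in_V unfolding geodesic_def by blast+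
  then have "d a v \<le> d a (p ! s) + d (p ! s) v" "d b u \<le> d b (p ! s) + d (p ! s) u"
    using dist_triangle \<open>p ! s \<in> V\<close> by blast+
  moreover have "d a (p ! s) = s" "d (p ! s) u = d a u - s"
    using geodesic_nth_dist[OF p st(1)] by simp_all
  moreover have "d b (p ! s) = t" "d (p ! s) v = d b v - t"
    using geodesic_nth_dist[OF q st(2)] st(3) by simp_all
  ultimately show False using far st by arith
qed

lemma crossing_edge_eq:
  assumes ab: "E a b" and uv: "E u v" and a: "d a u < d a v" and b: "d b v < d b u"
  shows "a = u \<and> b = v"
proof -
  have V: "a \<in> V" "b \<in> V" "u \<in> V" "v \<in> V" using edgeD ab uv by auto
  define k where "k = d a u"
  have dav: "d a v = Suc k" using dist_edge_le[OF uv V(1)] a k_def by simp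
  have dbu: "d b u = Suc (d b v)" using dist_edge_le[OF edgeD(4)[OF uv] V(2)] b by simp
  have "d b u \<le> d b a + d a u" "d a v \<le> d a b + d b v" using dist_triangle V by blast+
  then have dbv: "d b v = k"
    using dist_edge[OF ab] dist_edge[OF edgeD(4)[OF ab]] dav dbu k_def by simp
  show ?thesis
  proof (cases "k = 0")
    case True
    then show ?thesis using dist_eq_0D[OF V(1,3)] dist_eq_0D[OF V(2,4)] k_def dbv by simp
  next
    case False
    obtain p q where p: "geodesic a u p" and q: "geodesic b v q" using geodesic_exists V by meson
    have "d a u + d b v < d a v + d b u" using dav dbu dbv k_def by simp
    then have disjoint: "set p \<inter> set q = {}" by (rule geodesics_disjoint[OF p q])
    have "a \<in> set p" using nth_mem[of 0 p] geodesic_first[OF p] geodesic_length[OF p] by simp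
    have q_walk: "walk b v q" using q unfolding geodesic_def by simp
    then have "q = b # tl q" unfolding walk_def by (cases q) auto
    then have "[a, b] @ tl q = a # q" by simp
    then have "walk a v (a # q)" using walk_append[OF walk_edge[OF ab] q_walk] by simp
    moreover have "set (tl p) \<inter> set (a # q) = {}"
      using disjoint \<open>a \<in> set p\<close> geodesic_distinct[OF p] geodesic_first[OF p]
      by (cases p) auto
    moreover have "distinct (a # q)"
      using disjoint \<open>a \<in> set p\<close> geodesic_distinct[OF q] by auto
    moreover have "4 \<le> length p + length (a # q)"
      using geodesic_length[OF p] geodesic_length[OF q] dbv k_def False by simp
    moreover have "walk a u p" using p unfolding geodesic_def by simp
    ultimately show ?thesis
      using paths_to_edge_ends_impossible[OF _ geodesic_distinct[OF p] _ _ uv] by blast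
  qed
qed

text \<open>\<open>side (u, v) x\<close>: for an edge \<open>uv\<close>, the vertex \<open>x\<close> lies in the component of \<open>u\<close>
  after deleting \<open>uv\<close>.\<close>
definition side :: "'a \<times> 'a \<Rightarrow> 'a \<Rightarrow> bool" where
  "side e x \<longleftrightarrow> d x (fst e) < d x (snd e)"

lemma side_ends: assumes "E u v" shows "side (u, v) u" "\<not> side (u, v) v"
  using dist_edge[OF assms] dist_edge[OF edgeD(4)[OF assms]] dist_self edgeD[OF assms]
  unfolding side_def by auto

lemma side_swap: assumes "E u v" "x \<in> V" shows "side (v, u) x \<longleftrightarrow> \<not> side (u, v) x"
  using edge_ends_dist_neq[OF assms] unfolding side_def by auto

lemma edge_changing_side:
  assumes uv: "E u v" and ab: "E a b" and change: "side (u, v) a \<noteq> side (u, v) b"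
  shows "(a, b) = (u, v) \<or> (a, b) = (v, u)"
proof (cases "side (u, v) a")
  case True
  then have "d a u < d a v" "d b v < d b u"
    using change side_swap[OF uv edgeD(2)[OF ab]] unfolding side_def by auto
  then show ?thesis using crossing_edge_eq[OF ab uv] by simp
next
  case False
  then have "d b u < d b v" "d a v < d a u"
    using change side_swap[OF uv edgeD(1)[OF ab]] unfolding side_def by auto
  then show ?thesis using crossing_edge_eq[OF edgeD(4)[OF ab] uv] by simp
qed

lemma geodesic_side_change:
  assumes "geodesic x y ws" "E u v" "t < d x y" "side (u, v) (ws ! t) \<noteq> side (u, v) (ws ! Suc t)"
  shows "(ws ! t, ws ! Suc t) = (u, v) \<or> (ws ! t, ws ! Suc t) = (v, u)"
  using edge_changing_side[OF assms(2) geodesic_edge[OF assms(1,3)] assms(4)] .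

lemma geodesic_step_unique:
  assumes ws: "geodesic x y ws" and t: "t < d x y" "t' < d x y"
    and step: "(ws ! t, ws ! Suc t) = (ws ! t', ws ! Suc t') \<or> (ws ! t, ws ! Suc t) = (ws ! Suc t', ws ! t')"
  shows "t = t'"
proof -
  have inj: "i = j" if "ws ! i = ws ! j" "i \<le> d x y" "j \<le> d x y" for i j
    using nth_eq_iff_index_eq[OF geodesic_distinct[OF ws]] geodesic_length[OF ws] that by simp
  from step show ?thesis
  proof
    assume "(ws ! t, ws ! Suc t) = (ws ! t', ws ! Suc t')"
    then show ?thesis using inj[of t t'] t by simp
  next
    assume "(ws ! t, ws ! Suc t) = (ws ! Suc t', ws ! t')"
    then have "t = Suc t'" "Suc t = t'" using inj[of t "Suc t'"] inj[of "Suc t" t'] t by simp_all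
    then show ?thesis by simp
  qed
qed

lemma geodesic_side_changes_once:
  assumes ws: "geodesic x y ws" and uv: "E u v" and t: "t < d x y" "t' < d x y"
    and "side (u, v) (ws ! t) \<noteq> side (u, v) (ws ! Suc t)"
    and "side (u, v) (ws ! t') \<noteq> side (u, v) (ws ! Suc t')"
  shows "t = t'"
proof (rule geodesic_step_unique[OF ws t])
  have "(ws ! t, ws ! Suc t) \<in> {(u, v), (v, u)}" "(ws ! t', ws ! Suc t') \<in> {(u, v), (v, u)}"
    using geodesic_side_change[OF ws uv t(1)] geodesic_side_change[OF ws uv t(2)] assms(5,6) by auto
  then show "(ws ! t, ws ! Suc t) = (ws ! t', ws ! Suc t') \<or> (ws ! t, ws ! Suc t) = (ws ! Suc t', ws ! t')"
    by auto
qed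

lemma geodesic_side_const:
  assumes ws: "geodesic x y ws" and uv: "E u v" and same: "side (u, v) x = side (u, v) y"
    and t: "t \<le> d x y"
  shows "side (u, v) (ws ! t) = side (u, v) x"
proof (rule ccontr)
  let ?s = "\<lambda>i. side (u, v) (ws ! i)"
  assume "\<not> ?thesis"
  moreover have "?s 0 = side (u, v) x" "?s (d x y) = side (u, v) y"
    using geodesic_first[OF ws] geodesic_last[OF ws] by simp_all
  ultimately obtain t1 t2 where "t1 < t" "?s t1 \<noteq> ?s (Suc t1)" "t \<le> t2" "t2 < d x y" "?s t2 \<noteq> ?s (Suc t2)"
    using exists_change_between[of ?s 0 t] exists_change_between[of ?s t "d x y"] same t by auto
  then show False using geodesic_side_changes_once[OF ws uv, of t1 t2] by simp
qed

lemma geodesic_crosses_separating_edge: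
  assumes ws: "geodesic x y ws" and uv: "E u v" and sep: "side (u, v) x \<noteq> side (u, v) y"
  shows "\<exists>t < d x y. (ws ! t, ws ! Suc t) = (u, v) \<or> (ws ! t, ws ! Suc t) = (v, u)"
proof -
  let ?s = "\<lambda>i. side (u, v) (ws ! i)"
  have "?s 0 \<noteq> ?s (d x y)" using geodesic_first[OF ws] geodesic_last[OF ws] sep by simp
  then obtain t where "t < d x y" "?s t \<noteq> ?s (Suc t)"
    using exists_change_between[of ?s 0 "d x y"] by auto
  then show ?thesis using geodesic_side_change[OF ws uv] by blast
qed

lemma geodesic_step_separates:
  assumes ws: "geodesic x y ws" and t: "t < d x y"
  shows "side (ws ! t, ws ! Suc t) x" "\<not> side (ws ! t, ws ! Suc t) y"
proof -
  have "ws ! t \<in> V" "ws ! Suc t \<in> V" "y \<in> V"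
    using geodesic_in_V[OF ws] geodesic_length[OF ws] t walk_ends_in_V ws
    unfolding geodesic_def by (auto simp: subset_iff)
  then have "d y (ws ! t) = d x y - t" "d y (ws ! Suc t) = d x y - Suc t"
    using geodesic_nth_dist(2)[OF ws, of t] geodesic_nth_dist(2)[OF ws, of "Suc t"] t dist_commute
    by simp_all
  moreover have "d x (ws ! t) = t" "d x (ws ! Suc t) = Suc t"
    using geodesic_nth_dist(1)[OF ws, of t] geodesic_nth_dist(1)[OF ws, of "Suc t"] t by simp_all
  ultimately show "side (ws ! t, ws ! Suc t) x" "\<not> side (ws ! t, ws ! Suc t) y"
    unfolding side_def using t by simp_all
qed

definition edges :: "('a \<times> 'a) set" where
  "edges = {(u, v). E u v \<and> u < v}"

lemma finite_edges: "finite edges"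
proof (rule finite_subset)
  show "edges \<subseteq> V \<times> V" unfolding edges_def using edgeD by auto
qed (simp add: finite_V)

lemma geodesic_step_separating_edge:
  assumes ws: "geodesic x y ws" and t: "t < d x y"
  shows "(min (ws ! t) (ws ! Suc t), max (ws ! t) (ws ! Suc t)) \<in> {e \<in> edges. side e x \<noteq> side e y}"
proof -
  have uv: "E (ws ! t) (ws ! Suc t)" using geodesic_edge[OF ws t] .
  then have "ws ! t \<noteq> ws ! Suc t" using edgeD by blast
  then have "(min (ws ! t) (ws ! Suc t), max (ws ! t) (ws ! Suc t)) \<in> edges"
    using uv edgeD(4)[OF uv] unfolding edges_def by (auto simp: min_def max_def)
  moreover have "side (ws ! Suc t, ws ! t) z \<longleftrightarrow> \<not> side (ws ! t, ws ! Suc t) z" if "z \<in> V" for z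
    using side_swap[OF uv that] .
  moreover have "x \<in> V" "y \<in> V" using ws walk_ends_in_V unfolding geodesic_def by blast+
  ultimately show ?thesis
    using geodesic_step_separates[OF ws t] by (auto simp: min_def max_def)
qed

text \<open>The steps of a geodesic from \<open>x\<close> to \<open>y\<close> are exactly the edges separating
  \<open>x\<close> and \<open>y\<close>.\<close>
lemma dist_eq_split_dist: assumes x: "x \<in> V" and y: "y \<in> V" shows "d x y = split_dist edges side x y"
proof -
  obtain ws where ws: "geodesic x y ws" using geodesic_exists x y by blast
  define step where "step t = (min (ws ! t) (ws ! Suc t), max (ws ! t) (ws ! Suc t))" for t
  have step_cases: "step t = (ws ! t, ws ! Suc t) \<or> step t = (ws ! Suc t, ws ! t)" for t
    unfolding step_def by (auto simp: min_def max_def)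
  have step_in: "step t \<in> {e \<in> edges. side e x \<noteq> side e y}" if "t < d x y" for t
    using geodesic_step_separating_edge[OF ws that] unfolding step_def .
  have "bij_betw step {..<d x y} {e \<in> edges. side e x \<noteq> side e y}"
  proof (rule bij_betw_imageI)
    show "inj_on step {..<d x y}"
    proof (rule inj_onI)
      fix t t' assume "t \<in> {..<d x y}" "t' \<in> {..<d x y}" "step t = step t'"
      then show "t = t'"
        using geodesic_step_unique[OF ws] step_cases[of t] step_cases[of t'] by auto
    qed
    show "step ` {..<d x y} = {e \<in> edges. side e x \<noteq> side e y}"
    proof
      show "step ` {..<d x y} \<subseteq> {e \<in> edges. side e x \<noteq> side e y}" using step_in by auto
    next
      show "{e \<in> edges. side e x \<noteq> side e y} \<subseteq> step ` {..<d x y}"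
      proof
        fix e assume e: "e \<in> {e \<in> edges. side e x \<noteq> side e y}"
        then obtain u v where uv: "e = (u, v)" "E u v" "u < v" unfolding edges_def by auto
        then obtain t where "t < d x y" "(ws ! t, ws ! Suc t) = (u, v) \<or> (ws ! t, ws ! Suc t) = (v, u)"
          using geodesic_crosses_separating_edge[OF ws] e by auto
        then show "e \<in> step ` {..<d x y}" using uv unfolding step_def by force
      qed
    qed
  qed
  then have "card {..<d x y} = card {e \<in> edges. side e x \<noteq> side e y}" by (rule bij_betw_same_card)
  then show ?thesis unfolding split_dist_def by simp
qed

text \<open>A vertex \<open>z\<close> in the fourth quadrant is impossible: the geodesic from \<open>z\<close> to the end of
  \<open>f\<close> on its side of \<open>f\<close> must pass through \<open>u\<close>, yet stays on one side of \<open>f\<close>.\<close>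
lemma side_compatible:
  assumes e: "e \<in> edges" and f: "f \<in> edges" and "e \<noteq> f"
  shows "compatible_on V (side e) (side f)"
proof -
  obtain u v u' v' where uv: "e = (u, v)" "E u v" "u < v" and uv': "f = (u', v')" "E u' v'" "u' < v'"
    using e f unfolding edges_def by auto
  have e_f: "side e u' = side e v'"
  proof (rule ccontr)
    assume "side e u' \<noteq> side e v'"
    then have "(u', v') = (u, v) \<or> (u', v') = (v, u)" using edge_changing_side[OF uv(2) uv'(2)] uv(1) by simp
    then show False using uv uv' \<open>e \<noteq> f\<close> by auto
  qed
  have f_e: "side f u = side f v"
  proof (rule ccontr)
    assume "side f u \<noteq> side f v"
    then have "(u, v) = (u', v') \<or> (u, v) = (v', u')" using edge_changing_side[OF uv'(2) uv(2)] uv'(1) by simp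
    then show False using uv uv' \<open>e \<noteq> f\<close> by auto
  qed
  have "side e z \<noteq> (\<not> side e u') \<or> side f z \<noteq> (\<not> side f u)" if z: "z \<in> V" for z
  proof (rule ccontr)
    assume "\<not> ?thesis"
    then have ze: "side e z \<noteq> side e u'" and zf: "side f z \<noteq> side f u" by auto
    define w where "w = (if side f z = side f u' then u' else v')"
    have w: "w \<in> V" "side f w = side f z" "side e w = side e u'"
      using edgeD[OF uv'(2)] side_ends[OF uv'(2)] e_f uv'(1) unfolding w_def by auto
    obtain ws where ws: "geodesic z w ws" using geodesic_exists z w(1) by blast
    obtain t where t: "t < d z w" "(ws ! t, ws ! Suc t) = (u, v) \<or> (ws ! t, ws ! Suc t) = (v, u)"
      using geodesic_crosses_separating_edge[OF ws uv(2)] ze w(3) uv(1) by auto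
    then obtain t' where "t' \<le> d z w" "ws ! t' = u" by (metis Suc_leI less_imp_le prod.inject)
    then have "side f u = side f z"
      using geodesic_side_const[OF ws uv'(2), of t'] w(2) uv'(1) by simp
    then show False using zf by simp
  qed
  then show ?thesis unfolding compatible_on_def by blast
qed

lemma pairs2_memD: "p \<in> pairs2 V \<Longrightarrow> fst p \<in> V \<and> snd p \<in> V"
  unfolding pairs2_def by auto

lemma min4pc_entry_eq_split_dist:
  assumes "p \<in> pairs2 V" "q \<in> pairs2 V"
  shows "min4pc_entry V E p q = real (split_dist edges (pair_split side) p q)"
proof -
  obtain i j k l where pq: "p = (i, j)" "q = (k, l)" by (cases p, cases q) auto
  then have V: "i \<in> V" "j \<in> V" "k \<in> V" "l \<in> V" using pairs2_memD assms by auto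
  have "min4pc_entry V E p q
      = min (real (split_dist edges side i l) + real (split_dist edges side j k))
          (min (real (split_dist edges side i k) + real (split_dist edges side j l))
               (real (split_dist edges side i j) + real (split_dist edges side k l)))"
    unfolding min4pc_entry_def pq using dist_eq_split_dist V by simp
  also have "\<dots> = real (split_dist edges (pair_split side) p q)"
    unfolding pq by (rule split_dist_four_point[OF finite_edges V side_compatible])
  finally show ?thesis .
qed

end

section \<open>Real symmetric matrices\<close>

lemma symmetric_mat_entry:
  assumes "A \<in> carrier_mat n n" "transpose_mat A = A" "i < n" "j < n"
  shows "A $$ (i, j) = A $$ (j, i)"
  using assms by (metis index_transpose_mat(1) carrier_matD)

lemma nonzero_vec_entry: "v \<in> carrier_vec n \<Longrightarrow> v \<noteq> 0\<^sub>v n \<Longrightarrow> \<exists>i<n. v $ i \<noteq> 0"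
  by (metis carrier_vecD eq_vecI index_zero_vec(1,2))

text \<open>\<open>Q = v\<^sup>* A v\<close> equals its own conjugate and \<open>z |v|\<^sup>2\<close>.\<close>
lemma real_symmetric_eigenvalue_real:
  fixes A :: "real mat"
  assumes A: "A \<in> carrier_mat n n" "transpose_mat A = A"
    and v: "v \<in> carrier_vec n" "v \<noteq> 0\<^sub>v n" "map_mat complex_of_real A *\<^sub>v v = z \<cdot>\<^sub>v v"
  shows "Im z = 0"
proof -
  have Av: "(\<Sum>j = 0..<n. complex_of_real (A $$ (i, j)) * v $ j) = z * v $ i" if "i < n" for i
    using arg_cong[OF v(3), of "\<lambda>w. w $ i"] that A v(1) by (simp add: scalar_prod_def)
  define Q where "Q = (\<Sum>i = 0..<n. \<Sum>j = 0..<n. cnj (v $ i) * complex_of_real (A $$ (i, j)) * v $ j)"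
  define N where "N = (\<Sum>i = 0..<n. (Re (v $ i))\<^sup>2 + (Im (v $ i))\<^sup>2)"
  have "Q = (\<Sum>i = 0..<n. z * (cnj (v $ i) * v $ i))"
    unfolding Q_def by (intro sum.cong refl) (simp add: Av mult.assoc sum_distrib_left[symmetric] mult.left_commute)
  also have "\<dots> = z * complex_of_real N"
    unfolding N_def by (simp add: sum_distrib_left complex_mult_cnj mult.commute distrib_left sum.distrib)
  finally have QN: "Q = z * complex_of_real N" .
  have "cnj Q = Q"
  proof -
    have "cnj Q = (\<Sum>i = 0..<n. \<Sum>j = 0..<n. cnj (v $ j) * complex_of_real (A $$ (j, i)) * v $ i)"
      unfolding Q_def using symmetric_mat_entry[OF A] by (auto intro!: sum.cong simp: mult_ac)
    also have "\<dots> = Q" unfolding Q_def by (rule sum.swap)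
    finally show ?thesis .
  qed
  moreover have "N > 0"
  proof -
    obtain i where i: "i < n" "v $ i \<noteq> 0" using nonzero_vec_entry[OF v(1,2)] by blast
    then have "0 < (Re (v $ i))\<^sup>2 + (Im (v $ i))\<^sup>2" by (simp add: complex_eq_iff sum_power2_gt_zero_iff)
    also have "\<dots> \<le> N" unfolding N_def by (rule member_le_sum) (use i in auto)
    finally show ?thesis .
  qed
  ultimately have "cnj z * complex_of_real N = z * complex_of_real N" using QN by simp
  then have "cnj z = z" using \<open>N > 0\<close> by simp
  then show ?thesis by (metis cnj.sel(2) equal_neg_zero)
qed

lemma real_symmetric_eigenvector:
  fixes A :: "real mat"
  assumes A: "A \<in> carrier_mat n n" "transpose_mat A = A" and n: "0 < n"
  shows "\<exists>r v. v \<in> carrier_vec n \<and> v \<noteq> 0\<^sub>v n \<and> A *\<^sub>v v = r \<cdot>\<^sub>v v"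
proof -
  let ?Ac = "map_mat complex_of_real A"
  have "?Ac \<in> carrier_mat n n" using A by simp
  from spectrum_non_empty[OF this n] obtain z where "eigenvalue ?Ac z" unfolding spectrum_def by auto
  then obtain v where v: "v \<in> carrier_vec n" "v \<noteq> 0\<^sub>v n" "?Ac *\<^sub>v v = z \<cdot>\<^sub>v v"
    unfolding eigenvalue_def eigenvector_def using A by auto
  have z: "z = complex_of_real (Re z)"
    using real_symmetric_eigenvalue_real[OF A v] by (simp add: complex_eq_iff)
  have parts: "A *\<^sub>v map_vec f v = Re z \<cdot>\<^sub>v map_vec f v" if f: "f = Re \<or> f = Im" for f
  proof (rule eq_vecI)
    fix i assume "i < dim_vec (Re z \<cdot>\<^sub>v map_vec f v)"
    then have i: "i < n" using v(1) by simp
    have "(\<Sum>j = 0..<n. complex_of_real (A $$ (i, j)) * v $ j) = complex_of_real (Re z) * v $ i"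
      using arg_cong[OF v(3), of "\<lambda>w. w $ i"] i A v(1) z by (simp add: scalar_prod_def)
    then have "f (\<Sum>j = 0..<n. complex_of_real (A $$ (i, j)) * v $ j) = Re z * f (v $ i)"
      using f by auto
    then show "(A *\<^sub>v map_vec f v) $ i = (Re z \<cdot>\<^sub>v map_vec f v) $ i"
      using i A v(1) f by (auto simp: scalar_prod_def Re_sum Im_sum)
  qed (use A v(1) in simp)
  obtain i where "i < n" "v $ i \<noteq> 0" using nonzero_vec_entry[OF v(1,2)] by blast
  then have "map_vec Re v \<noteq> 0\<^sub>v n \<or> map_vec Im v \<noteq> 0\<^sub>v n"
    using v(1) by (metis complex_eq_iff index_map_vec(1) index_zero_vec(1) zero_complex.simps carrier_vecD)
  then show ?thesis using parts v(1) by (metis map_carrier_vec)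
qed

lemma reflection_involution:
  fixes w :: "nat \<Rightarrow> real"
  assumes c: "c * (\<Sum>k = 0..<n. (w k)\<^sup>2) = 2"
  defines "H \<equiv> mat n n (\<lambda>(i, j). of_bool (i = j) - c * w i * w j)"
  shows "H * H = 1\<^sub>m n"
proof (rule eq_matI)
  fix i j assume "i < dim_row (1\<^sub>m n)" "j < dim_col (1\<^sub>m n)"
  then have ij: "i < n" "j < n" by auto
  have "(H * H) $$ (i, j)
      = (\<Sum>k = 0..<n. (of_bool (i = k) - c * w i * w k) * (of_bool (k = j) - c * w k * w j))"
    using ij unfolding H_def by (simp add: scalar_prod_def)
  also have "\<dots> = (\<Sum>k = 0..<n. of_bool (i = k) * of_bool (k = j))
      - (\<Sum>k = 0..<n. of_bool (i = k) * (c * w k * w j))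
      - (\<Sum>k = 0..<n. of_bool (k = j) * (c * w i * w k))
      + c * w i * w j * (c * (\<Sum>k = 0..<n. (w k)\<^sup>2))"
    by (simp add: algebra_simps sum.distrib sum_subtractf sum_distrib_left power2_eq_square)
  also have "\<dots> = of_bool (i = j)"
  proof -
    have of_bool_mult: "of_bool P * x = (if P then x else 0)" for P and x :: real by simp
    show ?thesis using ij c by (simp add: of_bool_mult)
  qed
  finally show "(H * H) $$ (i, j) = 1\<^sub>m n $$ (i, j)" using ij by simp
qed (simp_all add: H_def)

text \<open>\<open>H = 1 - c w w\<^sup>T\<close> with \<open>w = u - e\<^sub>0\<close> is the reflection exchanging
  \<open>e\<^sub>0\<close> and \<open>u\<close>.\<close>
lemma householder_reflection:
  fixes u :: "real vec"
  assumes u: "u \<in> carrier_vec n" "u \<bullet> u = 1" and n: "0 < n"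
  shows "\<exists>H. H \<in> carrier_mat n n \<and> transpose_mat H = H \<and> H * H = 1\<^sub>m n \<and> col H 0 = u"
proof -
  have norm: "(\<Sum>k = 0..<n. (u $ k)\<^sup>2) = 1" using u by (simp add: scalar_prod_def power2_eq_square)
  have "(\<Sum>k\<in>{0}. (u $ k)\<^sup>2) \<le> (\<Sum>k = 0..<n. (u $ k)\<^sup>2)" by (rule sum_mono2) (use n in auto)
  then have "(u $ 0)\<^sup>2 \<le> 1" using norm by simp
  then have "u $ 0 \<le> 1" by (simp add: abs_square_le_1)
  show ?thesis
  proof (cases "u $ 0 = 1")
    case True
    have "u $ i = 0" if "0 < i" "i < n" for i
    proof -
      have "(\<Sum>k\<in>{0, i}. (u $ k)\<^sup>2) \<le> (\<Sum>k = 0..<n. (u $ k)\<^sup>2)" by (rule sum_mono2) (use that in auto)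
      then show ?thesis using norm True that by simp
    qed
    then have "col (1\<^sub>m n) 0 = u" using True u(1) n by (auto simp: unit_vec_def)
    then show ?thesis by (intro exI[of _ "1\<^sub>m n"]) simp
  next
    case False
    define w where "w i = u $ i - of_bool (i = 0)" for i
    define c where "c = 1 / (1 - u $ 0)"
    define H where "H = mat n n (\<lambda>(i, j). of_bool (i = j) - c * w i * w j)"
    have "(\<Sum>k = 0..<n. (w k)\<^sup>2) = (\<Sum>k = 0..<n. (u $ k)\<^sup>2) - 2 * u $ 0 + 1"
      using n by (simp add: sum.atLeast_Suc_lessThan w_def power2_diff)
    then have "c * (\<Sum>k = 0..<n. (w k)\<^sup>2) = 2" using False \<open>u $ 0 \<le> 1\<close> norm
      by (simp add: c_def field_simps)
    then have "H * H = 1\<^sub>m n" unfolding H_def by (rule reflection_involution)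
    moreover have "transpose_mat H = H" unfolding H_def by (rule eq_matI) auto
    moreover have "col H 0 = u"
    proof (rule eq_vecI)
      fix i assume "i < dim_vec u"
      then have "col H 0 $ i = of_bool (i = 0) - w i * (c * w 0)"
        using n u(1) by (simp add: H_def mult_ac)
      moreover have "c * w 0 = -1" using False by (simp add: c_def w_def field_simps)
      ultimately show "col H 0 $ i = u $ i" by (simp add: w_def)
    qed (use u(1) in \<open>simp add: H_def\<close>)
    moreover have "H \<in> carrier_mat n n" unfolding H_def by simp
    ultimately show ?thesis by blast
  qed
qed

lemma reflection_deflates:
  fixes A H :: "real mat"
  assumes A: "A \<in> carrier_mat (Suc n) (Suc n)" "transpose_mat A = A"
    and H: "H \<in> carrier_mat (Suc n) (Suc n)" "transpose_mat H = H" "H * H = 1\<^sub>m (Suc n)"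
    and eigen: "A *\<^sub>v col H 0 = r \<cdot>\<^sub>v col H 0"
  shows "\<exists>B. B \<in> carrier_mat n n \<and> transpose_mat B = B \<and>
           H * A * H = four_block_mat (mat 1 1 (\<lambda>_. r)) (0\<^sub>m 1 n) (0\<^sub>m n 1) B"
proof -
  define A' where "A' = H * A * H"
  have A': "A' \<in> carrier_mat (Suc n) (Suc n)" unfolding A'_def using A H by simp
  have "transpose_mat A' = transpose_mat H * transpose_mat (H * A)"
    unfolding A'_def by (rule transpose_mult) (use A H in auto)
  also have "transpose_mat (H * A) = transpose_mat A * transpose_mat H"
    by (rule transpose_mult) (use A H in auto)
  finally have "transpose_mat A' = A'" using A H by (simp add: A'_def)
  then have sym: "A' $$ (i, j) = A' $$ (j, i)" if "i < Suc n" "j < Suc n" for i j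
    using symmetric_mat_entry[OF A'] that by blast
  have "col A' 0 = (H * A) *\<^sub>v col H 0" unfolding A'_def using A H by (intro col_mult2) auto
  also have "\<dots> = H *\<^sub>v (A *\<^sub>v col H 0)"
    by (rule assoc_mult_mat_vec) (use A H in \<open>auto simp: carrier_vecI\<close>)
  also have "\<dots> = r \<cdot>\<^sub>v (H *\<^sub>v col H 0)"
    unfolding eigen by (rule mult_mat_vec) (use H in \<open>auto simp: carrier_vecI\<close>)
  also have "H *\<^sub>v col H 0 = col (H * H) 0"
    by (rule col_mult2[symmetric]) (use H in auto)
  finally have col: "col A' 0 = r \<cdot>\<^sub>v unit_vec (Suc n) 0" using H(3) by simp
  have col0: "A' $$ (i, 0) = r * of_bool (i = 0)" if "i < Suc n" for i
  proof -
    have "col A' 0 $ i = (r \<cdot>\<^sub>v unit_vec (Suc n) 0) $ i" by (simp only: col)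
    then show ?thesis using that A' by (simp add: unit_vec_def)
  qed
  define B where "B = mat n n (\<lambda>(i, j). A' $$ (Suc i, Suc j))"
  have "A' = four_block_mat (mat 1 1 (\<lambda>_. r)) (0\<^sub>m 1 n) (0\<^sub>m n 1) B"
  proof (rule eq_matI)
    fix i j assume "i < dim_row (four_block_mat (mat 1 1 (\<lambda>_. r)) (0\<^sub>m 1 n) (0\<^sub>m n 1) B)"
      "j < dim_col (four_block_mat (mat 1 1 (\<lambda>_. r)) (0\<^sub>m 1 n) (0\<^sub>m n 1) B)"
    then have ij: "i < Suc n" "j < Suc n" unfolding B_def by auto
    show "A' $$ (i, j) = four_block_mat (mat 1 1 (\<lambda>_. r)) (0\<^sub>m 1 n) (0\<^sub>m n 1) B $$ (i, j)"
      using col0[OF ij(1)] col0[OF ij(2)] sym[OF ij] ij unfolding B_def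
      by (cases i; cases j) auto
  qed (use A' in \<open>auto simp: B_def\<close>)
  moreover have "transpose_mat B = B" unfolding B_def by (rule eq_matI) (auto simp: sym)
  moreover have "B \<in> carrier_mat n n" unfolding B_def by simp
  ultimately show ?thesis unfolding A'_def by blast
qed

lemma orthogonal_block_extension:
  fixes U D :: "real mat"
  assumes U: "U \<in> carrier_mat n n" "transpose_mat U * U = 1\<^sub>m n"
    and R: "R \<in> carrier_mat 1 1" and D: "D \<in> carrier_mat n n"
  defines "F \<equiv> four_block_mat (1\<^sub>m 1) (0\<^sub>m 1 n) (0\<^sub>m n 1) U"
  shows "F \<in> carrier_mat (Suc n) (Suc n)" "transpose_mat F * F = 1\<^sub>m (Suc n)"
    and "F * four_block_mat R (0\<^sub>m 1 n) (0\<^sub>m n 1) D * transpose_mat F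
           = four_block_mat R (0\<^sub>m 1 n) (0\<^sub>m n 1) (U * D * transpose_mat U)"
proof -
  have Ft: "transpose_mat F = four_block_mat (1\<^sub>m 1) (0\<^sub>m 1 n) (0\<^sub>m n 1) (transpose_mat U)"
    unfolding F_def using U(1) by (subst transpose_four_block_mat[of _ 1 1 _ n _ n]) auto
  show "F \<in> carrier_mat (Suc n) (Suc n)" unfolding F_def using U(1) by auto
  show "transpose_mat F * F = 1\<^sub>m (Suc n)"
    unfolding Ft unfolding F_def using U by (subst mult_four_block_mat) auto
  show "F * four_block_mat R (0\<^sub>m 1 n) (0\<^sub>m n 1) D * transpose_mat F
      = four_block_mat R (0\<^sub>m 1 n) (0\<^sub>m n 1) (U * D * transpose_mat U)"
    unfolding Ft unfolding F_def using U R D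
    by (subst mult_four_block_mat, auto)+
qed

lemma mat_diag_Suc:
  "mat_diag (Suc n) e
     = four_block_mat (mat 1 1 (\<lambda>_. e 0)) (0\<^sub>m 1 n) (0\<^sub>m n 1) (mat_diag n (\<lambda>k. e (Suc k)))"
  by (rule eq_matI) (auto simp: mat_diag_def)

lemma unit_eigenvector:
  fixes A :: "real mat"
  assumes "v \<in> carrier_vec n" "v \<noteq> 0\<^sub>v n" "A \<in> carrier_mat n n" "A *\<^sub>v v = r \<cdot>\<^sub>v v"
  defines "u \<equiv> (1 / sqrt (v \<bullet> v)) \<cdot>\<^sub>v v"
  shows "u \<in> carrier_vec n" "u \<bullet> u = 1" "A *\<^sub>v u = r \<cdot>\<^sub>v u"
proof -
  have "0 < v \<bullet> v" using conjugate_square_greater_0_vec[OF assms(1)] assms(2) by simp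
  then show "u \<in> carrier_vec n" "u \<bullet> u = 1" "A *\<^sub>v u = r \<cdot>\<^sub>v u"
    unfolding u_def using assms(1,3,4)
    by (auto simp: mult_mat_vec smult_smult_assoc mult.commute real_sqrt_mult[symmetric] field_simps)
qed

lemma orthogonal_decomposition_conj_involution:
  fixes A H F D :: "real mat"
  assumes H: "H \<in> carrier_mat n n" "transpose_mat H = H" "H * H = 1\<^sub>m n"
    and F: "F \<in> carrier_mat n n" "transpose_mat F * F = 1\<^sub>m n"
    and A: "A \<in> carrier_mat n n" and D: "D \<in> carrier_mat n n"
    and FDF: "F * D * transpose_mat F = H * A * H"
  shows "transpose_mat (H * F) * (H * F) = 1\<^sub>m n" "A = (H * F) * D * transpose_mat (H * F)"
proof -
  have Ut: "transpose_mat (H * F) = transpose_mat F * H"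
    using H F(1) by (simp add: transpose_mult[of H])
  have "transpose_mat F * H * (H * F) = transpose_mat F * ((H * H) * F)"
    using H(1) F(1) by (simp add: assoc_mult_mat[of _ n n _ n _ n])
  then show "transpose_mat (H * F) * (H * F) = 1\<^sub>m n" unfolding Ut using H(3) F by simp
  have "(H * F) * D * (transpose_mat F * H) = H * (F * D * transpose_mat F) * H"
    using H(1) F(1) D by (simp add: assoc_mult_mat[of _ n n _ n _ n])
  also have "\<dots> = H * (H * (A * H)) * H" unfolding FDF using A H by simp
  also have "H * (H * (A * H)) = A * H"
    using assoc_mult_mat[OF H(1) H(1), of "A * H" n] A H by simp
  also have "A * H * H = A" using A H by simp
  finally show "A = (H * F) * D * transpose_mat (H * F)" unfolding Ut by simp
qed

lemma real_symmetric_orthogonally_diagonalizable: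
  fixes A :: "real mat"
  assumes "A \<in> carrier_mat n n" "transpose_mat A = A"
  shows "\<exists>U e. U \<in> carrier_mat n n \<and> transpose_mat U * U = 1\<^sub>m n \<and> A = U * mat_diag n e * transpose_mat U"
  using assms
proof (induction n arbitrary: A)
  case 0
  then show ?case by (intro exI[of _ "1\<^sub>m 0"] exI) (auto intro!: eq_matI)
next
  case (Suc n)
  note A = Suc.prems
  obtain r v where "v \<in> carrier_vec (Suc n)" "v \<noteq> 0\<^sub>v (Suc n)" "A *\<^sub>v v = r \<cdot>\<^sub>v v"
    using real_symmetric_eigenvector[OF A] by auto
  from unit_eigenvector[OF this(1,2) A(1) this(3)]
  obtain u where u: "u \<in> carrier_vec (Suc n)" "u \<bullet> u = 1" "A *\<^sub>v u = r \<cdot>\<^sub>v u" by blast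
  define R where "R = mat 1 1 (\<lambda>_. r)"
  obtain H where H: "H \<in> carrier_mat (Suc n) (Suc n)" "transpose_mat H = H" "H * H = 1\<^sub>m (Suc n)"
    "col H 0 = u"
    using householder_reflection[OF u(1,2)] by auto
  obtain B where B: "B \<in> carrier_mat n n" "transpose_mat B = B"
    "H * A * H = four_block_mat R (0\<^sub>m 1 n) (0\<^sub>m n 1) B"
    using reflection_deflates[OF A H(1-3)] u(3) H(4) unfolding R_def by blast
  obtain U' e' where U': "U' \<in> carrier_mat n n" "transpose_mat U' * U' = 1\<^sub>m n"
    "B = U' * mat_diag n e' * transpose_mat U'"
    using Suc.IH[OF B(1,2)] by blast
  define F where "F = four_block_mat (1\<^sub>m 1) (0\<^sub>m 1 n) (0\<^sub>m n 1) U'"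
  have "R \<in> carrier_mat 1 1" unfolding R_def by simp
  note F = orthogonal_block_extension[OF U'(1,2) this mat_diag_dim, folded F_def]
  define e where "e = case_nat r e'"
  have "F * mat_diag (Suc n) e * transpose_mat F = H * A * H"
    unfolding mat_diag_Suc B(3) U'(3) e_def using F(3) by (simp add: R_def)
  from orthogonal_decomposition_conj_involution[OF H(1-3) F(1,2) A(1) mat_diag_dim this]
  show ?case using H(1) F(1) by (intro exI[of _ "H * F"] exI[of _ e]) simp
qed

lemma poly_prod_linear_factors_eq_0: "poly (\<Prod>a\<leftarrow>es. [:- a, 1:]) r = 0 \<longleftrightarrow> r \<in> set (es :: real list)"
  by (induction es) auto

lemma order_prod_linear_factors: "order r (\<Prod>a\<leftarrow>es. [:- a, 1:]) = count_list es (r :: real)"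
proof (induction es)
  case Nil
  then show ?case using order_0I[of 1 r] by simp
next
  case (Cons a es)
  have "(\<Prod>x\<leftarrow>xs. [:- x, 1:]) \<noteq> (0 :: real poly)" for xs by (auto simp: prod_list_zero_iff)
  from this[of "a # es"] have "order r (\<Prod>x\<leftarrow>a # es. [:- x, 1:]) = order r [:- a, 1:] + order r (\<Prod>x\<leftarrow>es. [:- x, 1:])"
    unfolding list.map prod_list.Cons by (rule order_mult)
  also have "order r [:- a, 1:] = of_bool (r = a)"
    using order_power_n_n[of r 1] order_0I[of "[:- a, 1:]" r] by (cases "r = a") simp_all
  finally show ?case using Cons by simp
qed

lemma num_pos_eigenvalues_linear_factors:
  assumes "char_poly A = (\<Prod>a\<leftarrow>es. [:- a, 1:])"
  shows "num_pos_eigenvalues A = length (filter (\<lambda>a. 0 < a) es)"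
proof -
  let ?P = "filter (\<lambda>a. 0 < a) es"
  have "{r. 0 < r \<and> poly (char_poly A) r = 0} = set ?P"
    unfolding assms poly_prod_linear_factors_eq_0 by auto
  then have "num_pos_eigenvalues A = (\<Sum>r\<in>set ?P. count_list es r)"
    unfolding num_pos_eigenvalues_def assms order_prod_linear_factors by simp
  also have "\<dots> = (\<Sum>r\<in>set ?P. count_list ?P r)"
  proof (intro sum.cong refl)
    fix r assume "r \<in> set ?P"
    then have "0 < r" by simp
    then show "count_list es r = count_list ?P r" by (induction es) auto
  qed
  also have "\<dots> = length ?P" by (rule sum_count_set) auto
  finally show ?thesis .
qed

lemma char_poly_orthogonal_diag:
  fixes U :: "real mat"
  assumes U: "U \<in> carrier_mat n n" "transpose_mat U * U = 1\<^sub>m n"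
    and A: "A = U * mat_diag n e * transpose_mat U"
  shows "char_poly A = (\<Prod>a\<leftarrow>map e [0..<n]. [:- a, 1:])"
proof -
  have "U * transpose_mat U = 1\<^sub>m n"
    using mat_mult_left_right_inverse[OF _ U] U(1) by simp
  then have "similar_mat_wit A (mat_diag n e) U (transpose_mat U)"
    unfolding similar_mat_wit_def Let_def using A U by auto
  then have "char_poly A = char_poly (mat_diag n e)"
    by (intro char_poly_similar) (auto simp: similar_mat_def)
  also have "\<dots> = (\<Prod>a\<leftarrow>diag_mat (mat_diag n e). [:- a, 1:])"
    by (rule char_poly_upper_triangular[OF mat_diag_dim]) (auto simp: upper_triangular_def mat_diag_def)
  also have "diag_mat (mat_diag n e) = map e [0..<n]"
    unfolding diag_mat_def mat_diag_def by (intro nth_equalityI) auto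
  finally show ?thesis .
qed

context
  fixes U :: "nat \<Rightarrow> nat \<Rightarrow> real" and e :: "nat \<Rightarrow> real" and M :: "nat \<Rightarrow> nat \<Rightarrow> real" and n :: nat
  assumes orth: "\<And>i j. i < n \<Longrightarrow> j < n \<Longrightarrow> (\<Sum>r = 0..<n. U r i * U r j) = of_bool (i = j)"
    and rep: "\<And>a b. a < n \<Longrightarrow> b < n \<Longrightarrow> M a b = (\<Sum>k = 0..<n. U a k * e k * U b k)"
begin

lemma orthonormal_quadratic_form:
  "(\<Sum>a = 0..<n. \<Sum>b = 0..<n. (\<Sum>l = 0..<n. c l * U a l) * (\<Sum>l = 0..<n. c l * U b l) * M a b)
     = (\<Sum>k = 0..<n. e k * (c k)\<^sup>2)"
proof -
  define x where "x a = (\<Sum>l = 0..<n. c l * U a l)" for a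
  have coord: "(\<Sum>a = 0..<n. x a * U a k) = c k" if "k < n" for k
  proof -
    have "(\<Sum>a = 0..<n. x a * U a k) = (\<Sum>a = 0..<n. \<Sum>l = 0..<n. c l * (U a l * U a k))"
      unfolding x_def by (simp add: sum_distrib_right mult.assoc)
    also have "\<dots> = (\<Sum>l = 0..<n. c l * (\<Sum>a = 0..<n. U a l * U a k))"
      by (subst sum.swap) (simp add: sum_distrib_left)
    also have "\<dots> = (\<Sum>l = 0..<n. if l = k then c k else 0)"
      using orth that by (intro sum.cong refl) auto
    also have "\<dots> = c k" using that by simp
    finally show ?thesis .
  qed
  have "(\<Sum>a = 0..<n. \<Sum>b = 0..<n. x a * x b * M a b)
      = (\<Sum>a = 0..<n. \<Sum>b = 0..<n. \<Sum>k = 0..<n. e k * ((x a * U a k) * (x b * U b k)))"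
    by (intro sum.cong refl) (simp add: rep sum_distrib_left mult_ac)
  also have "\<dots> = (\<Sum>a = 0..<n. \<Sum>k = 0..<n. \<Sum>b = 0..<n. e k * ((x a * U a k) * (x b * U b k)))"
    by (rule sum.cong[OF refl]) (rule sum.swap)
  also have "\<dots> = (\<Sum>k = 0..<n. \<Sum>a = 0..<n. \<Sum>b = 0..<n. e k * ((x a * U a k) * (x b * U b k)))"
    by (rule sum.swap)
  also have "\<dots> = (\<Sum>k = 0..<n. e k * ((\<Sum>a = 0..<n. x a * U a k) * (\<Sum>b = 0..<n. x b * U b k)))"
    by (rule sum.cong[OF refl], subst sum_product) (simp only: sum_distrib_left)
  also have "\<dots> = (\<Sum>k = 0..<n. e k * (c k)\<^sup>2)"
    by (intro sum.cong refl) (simp add: coord power2_eq_square)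
  finally show ?thesis unfolding x_def .
qed

lemma orthonormal_trace: "(\<Sum>i = 0..<n. M i i) = (\<Sum>k = 0..<n. e k)"
proof -
  have "(\<Sum>i = 0..<n. M i i) = (\<Sum>i = 0..<n. \<Sum>k = 0..<n. e k * (U i k * U i k))"
    by (simp add: rep mult_ac)
  also have "\<dots> = (\<Sum>k = 0..<n. e k * (\<Sum>i = 0..<n. U i k * U i k))"
    by (subst sum.swap) (simp add: sum_distrib_left)
  also have "\<dots> = (\<Sum>k = 0..<n. e k)" using orth by simp
  finally show ?thesis .
qed

text \<open>A nonzero combination of columns \<open>i\<close> and \<open>j\<close> of \<open>U\<close> with coordinate sum 0 would make
  the form positive if \<open>e i\<close> and \<open>e j\<close> were both positive.\<close>
lemma at_most_one_positive_coefficient: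
  assumes neg: "\<And>x. (\<Sum>a = 0..<n. x a) = 0 \<Longrightarrow> (\<Sum>a = 0..<n. \<Sum>b = 0..<n. x a * x b * M a b) \<le> 0"
  shows "card {k. k < n \<and> 0 < e k} \<le> 1"
proof -
  have "i = j" if i: "i < n" "0 < e i" and j: "j < n" "0 < e j" for i j
  proof (rule ccontr)
    assume "i \<noteq> j"
    define \<sigma> where "\<sigma> k = (\<Sum>a = 0..<n. U a k)" for k
    define \<alpha> where "\<alpha> = (if \<sigma> i = 0 \<and> \<sigma> j = 0 then 1 else \<sigma> j)"
    define \<beta> where "\<beta> = (if \<sigma> i = 0 \<and> \<sigma> j = 0 then 0 else - \<sigma> i)"
    have ab: "\<alpha> \<noteq> 0 \<or> \<beta> \<noteq> 0" "\<alpha> * \<sigma> i + \<beta> * \<sigma> j = 0"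
      unfolding \<alpha>_def \<beta>_def by auto
    define c where "c k = (if k = i then \<alpha> else if k = j then \<beta> else 0)" for k
    have "(\<Sum>a = 0..<n. \<Sum>l = 0..<n. c l * U a l) = (\<Sum>l = 0..<n. c l * \<sigma> l)"
      unfolding \<sigma>_def by (subst sum.swap) (simp add: sum_distrib_left)
    also have "\<dots> = (\<Sum>l = 0..<n. (if l = i then \<alpha> * \<sigma> i else 0) + (if l = j then \<beta> * \<sigma> j else 0))"
      using \<open>i \<noteq> j\<close> by (intro sum.cong refl) (simp add: c_def)
    also have "\<dots> = \<alpha> * \<sigma> i + \<beta> * \<sigma> j" using i j by (simp add: sum.distrib)
    finally have "(\<Sum>a = 0..<n. \<Sum>l = 0..<n. c l * U a l) = 0" using ab(2) by simp
    from neg[OF this] have "(\<Sum>k = 0..<n. e k * (c k)\<^sup>2) \<le> 0"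
      by (simp only: orthonormal_quadratic_form)
    moreover have "(\<Sum>k = 0..<n. e k * (c k)\<^sup>2)
        = (\<Sum>k = 0..<n. (if k = i then e i * \<alpha>\<^sup>2 else 0) + (if k = j then e j * \<beta>\<^sup>2 else 0))"
      using \<open>i \<noteq> j\<close> by (intro sum.cong refl) (simp add: c_def)
    then have "(\<Sum>k = 0..<n. e k * (c k)\<^sup>2) = e i * \<alpha>\<^sup>2 + e j * \<beta>\<^sup>2"
      using i j by (simp add: sum.distrib)
    moreover have "0 < e i * \<alpha>\<^sup>2 + e j * \<beta>\<^sup>2"
      using i(2) j(2) ab(1) by (auto simp: add_pos_nonneg add_nonneg_pos)
    ultimately show False by simp
  qed
  then show ?thesis using card_le_Suc0_iff_eq[of "{k. k < n \<and> 0 < e k}"] by auto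
qed

end

lemma positive_coefficient_exists:
  fixes e :: "nat \<Rightarrow> real"
  assumes "(\<Sum>k = 0..<n. e k) = 0" "(\<Sum>k = 0..<n. u k * e k * v k) \<noteq> 0"
  shows "\<exists>k < n. 0 < e k"
proof (rule ccontr)
  assume "\<not> ?thesis"
  then have "\<forall>k\<in>{0..<n}. 0 \<le> - e k" by (meson atLeastLessThan_iff neg_0_le_iff_le not_less)
  moreover have "(\<Sum>k = 0..<n. - e k) = 0" using assms(1) by (simp add: sum_negf)
  ultimately have "\<forall>k\<in>{0..<n}. e k = 0" using sum_nonneg_eq_0_iff[of "{0..<n}" "\<lambda>k. - e k"] by simp
  then show False using assms(2) by simp
qed

lemma num_pos_eigenvalues_eq_1:
  fixes A :: "real mat"
  assumes A: "A \<in> carrier_mat n n" "transpose_mat A = A"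
    and diag: "\<And>i. i < n \<Longrightarrow> A $$ (i, i) = 0"
    and neg: "\<And>x. (\<Sum>a = 0..<n. x a) = 0 \<Longrightarrow> (\<Sum>a = 0..<n. \<Sum>b = 0..<n. x a * x b * A $$ (a, b)) \<le> 0"
    and nonzero: "i < n" "j < n" "A $$ (i, j) \<noteq> 0"
  shows "num_pos_eigenvalues A = 1"
proof -
  obtain U e where U: "U \<in> carrier_mat n n" "transpose_mat U * U = 1\<^sub>m n"
    "A = U * mat_diag n e * transpose_mat U"
    using real_symmetric_orthogonally_diagonalizable[OF A] by blast
  have orth: "(\<Sum>r = 0..<n. U $$ (r, i) * U $$ (r, j)) = of_bool (i = j)" if "i < n" "j < n" for i j
    using arg_cong[OF U(2), of "\<lambda>M. M $$ (i, j)"] U(1) that by (simp add: scalar_prod_def)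
  have rep: "A $$ (a, b) = (\<Sum>k = 0..<n. U $$ (a, k) * e k * U $$ (b, k))" if "a < n" "b < n" for a b
    using U(1) that unfolding U(3) by (simp add: mat_diag_mult_right scalar_prod_def)
  let ?K = "{k. k < n \<and> 0 < e k}"
  have num_pos: "num_pos_eigenvalues A = card ?K"
    unfolding num_pos_eigenvalues_linear_factors[OF char_poly_orthogonal_diag[OF U]]
    by (auto simp: length_filter_conv_card intro!: arg_cong[where f = card])
  have "card ?K \<le> 1" by (rule at_most_one_positive_coefficient[OF orth rep neg])
  moreover have "(\<Sum>k = 0..<n. e k) = 0"
    using orthonormal_trace[OF orth rep] diag by simp
  then have "?K \<noteq> {}"
    using positive_coefficient_exists rep[OF nonzero(1,2)] nonzero(3) by fastforce
  then have "card ?K \<noteq> 0" by simp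
  ultimately show ?thesis unfolding num_pos by linarith
qed

section \<open>The Min4PC matrix of a tree\<close>

context tree_graph
begin

lemma finite_pairs2: "finite (pairs2 V)"
proof (rule finite_subset)
  show "pairs2 V \<subseteq> V \<times> V" unfolding pairs2_def by auto
qed (simp add: finite_V)

lemma hypermetric_min4pc: "hypermetric (pairs2 V) (min4pc_entry V E)"
  by (rule hypermetric_split_dist[OF finite_pairs2 finite_edges min4pc_entry_eq_split_dist])

lemma negative_type_min4pc: "negative_type (pairs2 V) (min4pc_entry V E)"
  by (rule negative_type_split_dist[OF finite_pairs2 finite_edges min4pc_entry_eq_split_dist])

lemma min4pc_entry_pos:
  assumes "a \<in> V" "b \<in> V" "c \<in> V" "b \<noteq> c"
  shows "0 < min4pc_entry V E (a, b) (a, c)"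
proof -
  have "d b c \<le> d b a + d a c" "d b a = d a b" "d a a = 0" "d b c \<noteq> 0"
    using dist_triangle dist_commute dist_self dist_eq_0D assms by blast+
  then show ?thesis unfolding min4pc_entry_def by (simp add: min_def)
qed

lemma pairs_with_common_end:
  assumes "3 \<le> card V"
  obtains a b c where "(a, b) \<in> pairs2 V" "(a, c) \<in> pairs2 V" "b \<noteq> c"
proof -
  define a where "a = Min V"
  have "V \<noteq> {}" using assms by auto
  then have a: "a \<in> V" "\<And>x. x \<in> V \<Longrightarrow> a \<le> x" unfolding a_def using finite_V by simp_all
  have "2 \<le> card (V - {a})" using assms a(1) finite_V by (simp add: card_Diff_singleton)
  then obtain b where b: "b \<in> V - {a}" by (metis card.empty ex_in_conv not_numeral_le_zero)
  have "1 \<le> card (V - {a} - {b})"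
    using \<open>2 \<le> card (V - {a})\<close> b finite_V by (simp add: card_Diff_singleton)
  then obtain c where c: "c \<in> V - {a} - {b}" by (metis card.empty ex_in_conv not_one_le_zero)
  have "a < b" "a < c" using a(2) b c by force+
  then show ?thesis using that a(1) b c unfolding pairs2_def by auto
qed

lemma min4pc_matrix_num_pos_eigenvalues:
  assumes "3 \<le> card V"
  shows "num_pos_eigenvalues (min4pc_matrix V E) = 1"
proof -
  define ps where "ps = sorted_list_of_set (pairs2 V)"
  define N where "N = length ps"
  define s where "s e r \<longleftrightarrow> pair_split side e (ps ! r)" for e r
  have M: "min4pc_matrix V E = mat N N (\<lambda>(r, q). min4pc_entry V E (ps ! r) (ps ! q))"
    unfolding min4pc_matrix_def ps_def N_def Let_def ..
  have set_ps: "set ps = pairs2 V" unfolding ps_def using finite_pairs2 by simp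
  have entry: "min4pc_entry V E (ps ! r) (ps ! q) = real (split_dist edges s r q)" if "r < N" "q < N" for r q
    using min4pc_entry_eq_split_dist nth_mem[of r ps] nth_mem[of q ps] that set_ps
    unfolding split_dist_def s_def N_def by simp
  obtain a b c where "(a, b) \<in> set ps" "(a, c) \<in> set ps" "b \<noteq> c"
    using pairs_with_common_end[OF assms] set_ps by metis
  then obtain r q where rq: "r < N" "q < N" "ps ! r = (a, b)" "ps ! q = (a, c)" "b \<noteq> c"
    unfolding N_def in_set_conv_nth by metis
  show ?thesis unfolding M
  proof (rule num_pos_eigenvalues_eq_1)
    show "transpose_mat (mat N N (\<lambda>(r, q). min4pc_entry V E (ps ! r) (ps ! q)))
        = mat N N (\<lambda>(r, q). min4pc_entry V E (ps ! r) (ps ! q))"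
      by (rule eq_matI) (auto simp: entry split_dist_commute)
    show "(\<Sum>i = 0..<N. \<Sum>j = 0..<N. x i * x j * mat N N (\<lambda>(r, q). min4pc_entry V E (ps ! r) (ps ! q)) $$ (i, j)) \<le> 0"
      if "(\<Sum>i = 0..<N. x i) = 0" for x
      using split_dist_form_nonpos[OF _ finite_edges that] by (simp add: entry)
    have "(a, b) \<in> pairs2 V" "(a, c) \<in> pairs2 V" using rq set_ps nth_mem unfolding N_def by metis+
    then show "mat N N (\<lambda>(r, q). min4pc_entry V E (ps ! r) (ps ! q)) $$ (r, q) \<noteq> 0"
      using min4pc_entry_pos[of a b c] rq pairs2_memD by fastforce
  qed (use rq in \<open>simp_all add: entry\<close>)
qed

end

theorem corollary4p3:
  fixes V :: "'a::linorder set" and E :: "'a \<Rightarrow> 'a \<Rightarrow> bool"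
  assumes "is_tree V E"
  shows "hypermetric (pairs2 V) (min4pc_entry V E) \<and>
         negative_type (pairs2 V) (min4pc_entry V E) \<and>
         (card V \<ge> 3 \<longrightarrow> num_pos_eigenvalues (min4pc_matrix V E) = 1)"
proof -
  interpret tree_graph V E using assms by unfold_locales
  show ?thesis using hypermetric_min4pc negative_type_min4pc min4pc_matrix_num_pos_eigenvalues by blast
qed

end
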